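(* Let $\Delta$ be a metrizable Choquet simplex, $G$ a countable abelian group, and $\psi\colon G\to\mathrm{Aff}(\Delta)$ a homomorphism whose image contains the constant function $1$. Make $G$ a partially ordered group with positive cone $G_+=\{g\in G:\psi(g)(x)>0\text{ for all }x\in\Delta\}\cup\{0\}$, and take as order unit any $g_0\in G$ with $\psi(g_0)=1$. Then every state on $(G,G_+,g_0)$ (an order preserving homomorphism $\omega\colon G\to\mathbb{R}$ with $\omega(g_0)=1$) is of the form $g\mapsto\psi(g)(x)$ for some $x\in\Delta$.
   Context: $\mathrm{Aff}(\Delta)$ denotes the space of continuous affine real valued functions on $\Delta$. *)

theory Defs
  imports "HOL-Analysis.Analysis"
begin

text \<open>The cone over a convex set K in V, sitting in V \<times> real:
  C = {(t x, t) | t \<ge> 0, x \<in> K}, ordered by u \<le> v iff v - u \<in> C.\<close>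
definition simplex_cone :: "'a::real_vector set \<Rightarrow> ('a \<times> real) set" where
  "simplex_cone K = {(t *\<^sub>R x, t) | t x. t \<ge> 0 \<and> x \<in> K}"

text \<open>Choquet simplex (Choquet--Meyer): a nonempty compact convex set whose cone
  is a lattice in its own ordering (every pair has a supremum and an infimum in C).\<close>
definition choquet_simplex :: "'a::real_normed_vector set \<Rightarrow> bool" where
  "choquet_simplex K \<longleftrightarrow> K \<noteq> {} \<and> compact K \<and> convex K \<and>
     (let C = simplex_cone K in
       \<forall>u\<in>C. \<forall>v\<in>C.
         (\<exists>w\<in>C. w - u \<in> C \<and> w - v \<in> C \<and> (\<forall>z\<in>C. z - u \<in> C \<and> z - v \<in> C \<longrightarrow> z - w \<in> C)) \<and>
         (\<exists>w\<in>C. u - w \<in> C \<and> v - w \<in> C \<and> (\<forall>z\<in>C. u - z \<in> C \<and> v - z \<in> C \<longrightarrow> w - z \<in> C)))"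

definition aff_on :: "'a::real_normed_vector set \<Rightarrow> ('a \<Rightarrow> real) \<Rightarrow> bool" where
  "aff_on K f \<longleftrightarrow> continuous_on K f \<and>
     (\<forall>x\<in>K. \<forall>y\<in>K. \<forall>t::real. 0 \<le> t \<and> t \<le> 1 \<longrightarrow>
        f ((1 - t) *\<^sub>R x + t *\<^sub>R y) = (1 - t) * f x + t * f y)"

definition pos_cone :: "'a set \<Rightarrow> ('g::ab_group_add \<Rightarrow> 'a \<Rightarrow> real) \<Rightarrow> 'g set" where
  "pos_cone K \<psi> = {g. \<forall>x\<in>K. \<psi> g x > 0} \<union> {0}"

definition is_state :: "'g::ab_group_add set \<Rightarrow> 'g \<Rightarrow> ('g \<Rightarrow> real) \<Rightarrow> bool" where
  "is_state P g0 \<omega> \<longleftrightarrow> (\<forall>g h. \<omega> (g + h) = \<omega> g + \<omega> h) \<and>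
     (\<forall>g h. h - g \<in> P \<longrightarrow> \<omega> g \<le> \<omega> h) \<and> \<omega> g0 = 1"

end

theory Submission
  imports Defs
begin

text \<open>If \<omega> agrees with some \<psi>(-)(x) on every finite set of group elements, compactness of
  \<Delta> yields a single x that works for all of G. On a finite set F, suppose no x fits. The
  point (\<omega> g) (g \<in> F) then lies off the compact convex image of \<Delta> in \<real>^F, so its nearest point
  gives a strictly separating functional c. Scaling c and rounding it to integers k yields
  h = \<Sum> k(g) g with \<psi>(h) \<le> \<omega>(h) - 2 on \<Delta>; then n g0 - h is positive for
  n = \<lceil>\<omega>(h)\<rceil> - 1, and monotonicity of \<omega> gives the contradiction \<omega>(h) \<le> n < \<omega>(h).\<close>

definition int_mult :: "int \<Rightarrow> 'g::ab_group_add \<Rightarrow> 'g" where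
  "int_mult k g = (\<Sum>_<nat k. g) - (\<Sum>_<nat (- k). g)"

lemma additive_int_mult:
  fixes f :: "'g::ab_group_add \<Rightarrow> 'b::ring_1"
  assumes "Modules.additive f"
  shows "f (int_mult k g) = of_int k * f g"
proof -
  have "f (int_mult k g) = (of_nat (nat k) - of_nat (nat (- k))) * f g"
    by (simp add: int_mult_def additive.diff[OF assms] additive.sum[OF assms] algebra_simps)
  also have "of_nat (nat k) - of_nat (nat (- k)) = (of_int k :: 'b)"
    by (cases "0 \<le> k") simp_all
  finally show ?thesis .
qed

lemma additive_sum_int_mult:
  fixes f :: "'g::ab_group_add \<Rightarrow> 'b::ring_1"
  assumes "Modules.additive f"
  shows "f (\<Sum>i\<in>F. int_mult (k i) (g i)) = (\<Sum>i\<in>F. of_int (k i) * f (g i))"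
  by (simp add: additive.sum[OF assms] additive_int_mult[OF assms])

lemma aff_on_convex_combination:
  assumes "aff_on K f" "x \<in> K" "y \<in> K" "0 \<le> t" "t \<le> 1"
  shows "f ((1 - t) *\<^sub>R x + t *\<^sub>R y) = (1 - t) * f x + t * f y"
  using assms by (simp add: aff_on_def)

lemma nonpos_if_quadratic_bound:
  fixes S U :: real
  assumes "U \<ge> 0" and bound: "\<And>t. 0 < t \<Longrightarrow> t \<le> 1 \<Longrightarrow> 2 * S \<le> t * U"
  shows "S \<le> 0"
proof (rule ccontr)
  assume "\<not> S \<le> 0"
  define t where "t = min 1 (S / (U + 1))"
  have "0 < t" "t \<le> 1" using \<open>\<not> S \<le> 0\<close> \<open>U \<ge> 0\<close> by (auto simp: t_def)
  have "t * U \<le> S / (U + 1) * U" using \<open>U \<ge> 0\<close> by (intro mult_right_mono) (auto simp: t_def)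
  also have "\<dots> < S" using \<open>\<not> S \<le> 0\<close> \<open>U \<ge> 0\<close> by (simp add: field_simps)
  finally show False using bound[OF \<open>0 < t\<close> \<open>t \<le> 1\<close>] \<open>\<not> S \<le> 0\<close> by linarith
qed

lemma sum_squares_minimizer_variational:
  fixes f :: "'i \<Rightarrow> 'a::real_normed_vector \<Rightarrow> real"
  assumes "convex K" "p \<in> K" "x \<in> K" and aff: "\<forall>i\<in>F. aff_on K (f i)"
    and min: "\<forall>y\<in>K. (\<Sum>i\<in>F. (w i - f i p)\<^sup>2) \<le> (\<Sum>i\<in>F. (w i - f i y)\<^sup>2)"
  shows "(\<Sum>i\<in>F. (w i - f i p) * (f i x - f i p)) \<le> 0"
proof (rule nonpos_if_quadratic_bound)
  define c where "c i = w i - f i p" for i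
  define u where "u i = f i x - f i p" for i
  show "(\<Sum>i\<in>F. (u i)\<^sup>2) \<ge> 0" by (simp add: sum_nonneg)
  fix t :: real
  assume "0 < t" "t \<le> 1"
  define z where "z = (1 - t) *\<^sub>R p + t *\<^sub>R x"
  have "z \<in> K"
    using \<open>convex K\<close> \<open>p \<in> K\<close> \<open>x \<in> K\<close> \<open>0 < t\<close> \<open>t \<le> 1\<close> by (simp add: z_def convex_def)
  have fz: "f i z = f i p + t * u i" if "i \<in> F" for i
    using aff_on_convex_combination[OF bspec[OF aff that] \<open>p \<in> K\<close> \<open>x \<in> K\<close>] \<open>0 < t\<close> \<open>t \<le> 1\<close>
    by (simp add: z_def u_def algebra_simps)
  have "(\<Sum>i\<in>F. (w i - f i z)\<^sup>2) = (\<Sum>i\<in>F. (c i)\<^sup>2 - 2 * t * (c i * u i) + t * (t * (u i)\<^sup>2))"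
    by (intro sum.cong) (simp_all add: fz c_def power2_eq_square algebra_simps)
  also have "\<dots> = (\<Sum>i\<in>F. (c i)\<^sup>2) - 2 * t * (\<Sum>i\<in>F. c i * u i) + t * (t * (\<Sum>i\<in>F. (u i)\<^sup>2))"
    by (simp add: sum.distrib sum_subtractf sum_distrib_left)
  finally have "(\<Sum>i\<in>F. (w i - f i z)\<^sup>2)
      = (\<Sum>i\<in>F. (c i)\<^sup>2) - 2 * t * (\<Sum>i\<in>F. c i * u i) + t * (t * (\<Sum>i\<in>F. (u i)\<^sup>2))" .
  moreover have "(\<Sum>i\<in>F. (c i)\<^sup>2) \<le> (\<Sum>i\<in>F. (w i - f i z)\<^sup>2)"
    using min \<open>z \<in> K\<close> by (simp add: c_def)
  ultimately have "t * (2 * (\<Sum>i\<in>F. c i * u i)) \<le> t * (t * (\<Sum>i\<in>F. (u i)\<^sup>2))"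
    by simp
  then show "2 * (\<Sum>i\<in>F. c i * u i) \<le> t * (\<Sum>i\<in>F. (u i)\<^sup>2)"
    using \<open>0 < t\<close> by simp
qed

lemma affine_image_strict_separation:
  fixes f :: "'i \<Rightarrow> 'a::real_normed_vector \<Rightarrow> real"
  assumes "compact K" "convex K" "K \<noteq> {}" "finite F" and aff: "\<forall>i\<in>F. aff_on K (f i)"
    and no_common: "\<not> (\<exists>x\<in>K. \<forall>i\<in>F. f i x = w i)"
  shows "\<exists>c \<delta>. \<delta> > 0 \<and> (\<forall>x\<in>K. \<delta> \<le> (\<Sum>i\<in>F. c i * (w i - f i x)))"
proof -
  have "continuous_on K (\<lambda>x. \<Sum>i\<in>F. (w i - f i x)\<^sup>2)"
    using aff by (intro continuous_intros) (auto simp: aff_on_def)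
  then obtain p where "p \<in> K" and min: "\<forall>y\<in>K. (\<Sum>i\<in>F. (w i - f i p)\<^sup>2) \<le> (\<Sum>i\<in>F. (w i - f i y)\<^sup>2)"
    using continuous_attains_inf[OF \<open>compact K\<close> \<open>K \<noteq> {}\<close>] by blast
  define c where "c i = w i - f i p" for i
  obtain j where "j \<in> F" "f j p \<noteq> w j" using no_common \<open>p \<in> K\<close> by blast
  have "0 < (c j)\<^sup>2" using \<open>f j p \<noteq> w j\<close> by (simp add: c_def)
  also have "\<dots> \<le> (\<Sum>i\<in>F. (c i)\<^sup>2)" using \<open>j \<in> F\<close> \<open>finite F\<close> by (intro member_le_sum) auto
  finally have "0 < (\<Sum>i\<in>F. (c i)\<^sup>2)" .
  moreover have "(\<Sum>i\<in>F. (c i)\<^sup>2) \<le> (\<Sum>i\<in>F. c i * (w i - f i x))" if "x \<in> K" for x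
  proof -
    have "(\<Sum>i\<in>F. c i * (w i - f i x)) = (\<Sum>i\<in>F. (c i)\<^sup>2) - (\<Sum>i\<in>F. c i * (f i x - f i p))"
      by (simp add: sum_subtractf[symmetric] power2_eq_square c_def algebra_simps)
    with sum_squares_minimizer_variational[OF \<open>convex K\<close> \<open>p \<in> K\<close> that aff min] show ?thesis
      by (simp add: c_def)
  qed
  ultimately show ?thesis by blast
qed

text \<open>Rounding D c to integers changes the functional by at most the sum of the
  |w i - f i x|, which is bounded on the compact set K; the scale D absorbs this error.\<close>
lemma integer_strict_separation:
  fixes f :: "'i \<Rightarrow> 'a::real_normed_vector \<Rightarrow> real"
  assumes "compact K" and cont: "\<forall>i\<in>F. continuous_on K (f i)"
    and "\<delta> > 0" and sep: "\<forall>x\<in>K. \<delta> \<le> (\<Sum>i\<in>F. c i * (w i - f i x))"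
  shows "\<exists>k :: 'i \<Rightarrow> int. \<forall>x\<in>K. B \<le> (\<Sum>i\<in>F. of_int (k i) * (w i - f i x))"
proof -
  define E where "E x = (\<Sum>i\<in>F. \<bar>w i - f i x\<bar>)" for x
  have "compact (E ` K)"
    unfolding E_def using cont by (intro compact_continuous_image continuous_intros \<open>compact K\<close>) auto
  then obtain M where M: "\<forall>x\<in>K. E x \<le> M"
    by (metis bounded_real compact_imp_bounded abs_le_D1 image_eqI)
  define D where "D = (\<bar>M\<bar> + \<bar>B\<bar>) / \<delta>"
  define k where "k i = \<lfloor>D * c i\<rfloor>" for i
  have "B \<le> (\<Sum>i\<in>F. of_int (k i) * (w i - f i x))" if "x \<in> K" for x
  proof -
    have "- \<bar>w i - f i x\<bar> \<le> (of_int (k i) - D * c i) * (w i - f i x)" for i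
    proof -
      have "\<bar>of_int (k i) - D * c i\<bar> \<le> 1"
        unfolding k_def using of_int_floor_le[of "D * c i"] real_of_int_floor_gt_diff_one[of "D * c i"]
        by linarith
      then have "\<bar>(of_int (k i) - D * c i) * (w i - f i x)\<bar> \<le> \<bar>w i - f i x\<bar>"
        by (simp add: abs_mult mult_left_le_one_le)
      then show ?thesis by linarith
    qed
    then have "- E x \<le> (\<Sum>i\<in>F. (of_int (k i) - D * c i) * (w i - f i x))"
      by (simp add: E_def flip: sum_negf) (rule sum_mono)
    moreover have "D * \<delta> \<le> D * (\<Sum>i\<in>F. c i * (w i - f i x))"
      using sep that \<open>\<delta> > 0\<close> by (intro mult_left_mono) (auto simp: D_def)
    moreover have "D * \<delta> = \<bar>M\<bar> + \<bar>B\<bar>" using \<open>\<delta> > 0\<close> by (simp add: D_def)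
    moreover have "(\<Sum>i\<in>F. of_int (k i) * (w i - f i x))
        = D * (\<Sum>i\<in>F. c i * (w i - f i x)) + (\<Sum>i\<in>F. (of_int (k i) - D * c i) * (w i - f i x))"
      by (simp add: sum_distrib_left sum.distrib[symmetric] algebra_simps)
    ultimately show ?thesis using M that by fastforce
  qed
  then show ?thesis by blast
qed

lemma additive_evaluation:
  assumes "\<forall>g h. \<forall>x\<in>K. \<psi> (g + h) x = \<psi> g x + \<psi> h x" "x \<in> K"
  shows "Modules.additive (\<lambda>g. \<psi> g x)"
  using assms by unfold_locales simp

lemma state_additive: "is_state P g0 \<omega> \<Longrightarrow> Modules.additive \<omega>"
  by unfold_locales (simp add: is_state_def)

lemma state_le_of_int_bound:
  fixes \<psi> :: "'g::ab_group_add \<Rightarrow> 'a \<Rightarrow> real"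
  assumes state: "is_state (pos_cone K \<psi>) g0 \<omega>" and unit: "\<forall>x\<in>K. \<psi> g0 x = 1"
    and add: "\<forall>g h. \<forall>x\<in>K. \<psi> (g + h) x = \<psi> g x + \<psi> h x"
    and bound: "\<forall>x\<in>K. \<psi> h x < of_int n"
  shows "\<omega> h \<le> of_int n"
proof -
  have "\<psi> (int_mult n g0 - h) x > 0" if "x \<in> K" for x
    using bound unit that
    by (simp add: additive.diff[OF additive_evaluation[OF add that]]
                  additive_int_mult[OF additive_evaluation[OF add that]])
  then have "int_mult n g0 - h \<in> pos_cone K \<psi>" by (simp add: pos_cone_def)
  then have "\<omega> h \<le> \<omega> (int_mult n g0)" using state by (simp add: is_state_def)
  also have "\<dots> = of_int n"
    using state by (simp add: additive_int_mult[OF state_additive[OF state]] is_state_def)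
  finally show ?thesis .
qed

lemma state_agrees_on_finite:
  fixes K :: "'a::real_normed_vector set" and \<psi> :: "'g::ab_group_add \<Rightarrow> 'a \<Rightarrow> real"
  assumes "compact K" "convex K" "K \<noteq> {}" "finite F"
    and aff: "\<forall>g. aff_on K (\<psi> g)"
    and add: "\<forall>g h. \<forall>x\<in>K. \<psi> (g + h) x = \<psi> g x + \<psi> h x"
    and unit: "\<forall>x\<in>K. \<psi> g0 x = 1"
    and state: "is_state (pos_cone K \<psi>) g0 \<omega>"
  shows "\<exists>x\<in>K. \<forall>g\<in>F. \<psi> g x = \<omega> g"
proof (rule ccontr)
  assume "\<not> ?thesis"
  then obtain c \<delta> where "\<delta> > 0" and sep: "\<forall>x\<in>K. \<delta> \<le> (\<Sum>g\<in>F. c g * (\<omega> g - \<psi> g x))"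
    using affine_image_strict_separation[OF assms(1-4)] aff by blast
  have "\<forall>g\<in>F. continuous_on K (\<psi> g)" using aff by (simp add: aff_on_def)
  then obtain k where gap: "\<forall>x\<in>K. 2 \<le> (\<Sum>g\<in>F. of_int (k g) * (\<omega> g - \<psi> g x))"
    using integer_strict_separation[OF \<open>compact K\<close> _ \<open>\<delta> > 0\<close> sep] by blast
  define h where "h = (\<Sum>g\<in>F. int_mult (k g) g)"
  have "\<psi> h x < of_int (\<lceil>\<omega> h\<rceil> - 1)" if "x \<in> K" for x
  proof -
    have "\<omega> h - \<psi> h x = (\<Sum>g\<in>F. of_int (k g) * (\<omega> g - \<psi> g x))"
      by (simp add: h_def additive_sum_int_mult[OF additive_evaluation[OF add that]]
          additive_sum_int_mult[OF state_additive[OF state]] right_diff_distrib sum_subtractf)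
    then have "\<psi> h x + 2 \<le> \<omega> h" using gap that by auto
    then show ?thesis using le_of_int_ceiling[of "\<omega> h"] by linarith
  qed
  then have "\<omega> h \<le> of_int (\<lceil>\<omega> h\<rceil> - 1)"
    using state_le_of_int_bound[OF state unit add] by blast
  then show False using ceiling_correct[of "\<omega> h"] by simp
qed

theorem lemma5p2:
  fixes K :: "'a::real_normed_vector set"
    and \<psi> :: "'g::ab_group_add \<Rightarrow> 'a \<Rightarrow> real"
    and g0 :: 'g and \<omega> :: "'g \<Rightarrow> real"
  assumes "choquet_simplex K"
    and "countable (UNIV :: 'g set)"
    and "\<forall>g. aff_on K (\<psi> g)"
    and "\<forall>g h. \<forall>x\<in>K. \<psi> (g + h) x = \<psi> g x + \<psi> h x"
    and "\<exists>g. \<forall>x\<in>K. \<psi> g x = 1"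
    and "\<forall>x\<in>K. \<psi> g0 x = 1"
    and "is_state (pos_cone K \<psi>) g0 \<omega>"
  shows "\<exists>x\<in>K. \<forall>g. \<omega> g = \<psi> g x"
proof -
  have "compact K" "convex K" "K \<noteq> {}"
    using assms(1) by (auto simp: choquet_simplex_def)
  have "K \<inter> (\<Inter>g\<in>UNIV. {x \<in> K. \<psi> g x = \<omega> g}) \<noteq> {}"
  proof (rule compact_imp_fip_image[OF \<open>compact K\<close>])
    show "closed {x \<in> K. \<psi> g x = \<omega> g}" for g
      using assms(3) \<open>compact K\<close>
      by (intro continuous_closed_preimage_constant compact_imp_closed) (auto simp: aff_on_def)
    show "K \<inter> (\<Inter>g\<in>F. {x \<in> K. \<psi> g x = \<omega> g}) \<noteq> {}" if "finite F" for F
      using state_agrees_on_finite[OF \<open>compact K\<close> \<open>convex K\<close> \<open>K \<noteq> {}\<close> that assms(3,4,6,7)]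
      by blast
  qed
  then obtain x where "x \<in> K" "\<forall>g. \<psi> g x = \<omega> g" by blast
  then show ?thesis by metis
qed

end
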